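(* Let $\chi,m\geq 2$ be integers and write $R=\vec{R}(\chi)$. Then there exists an integer $M_0=M_0(\chi,m)$ such that the following holds for every $M\geq M_0$. Let the edges of $K=K^{(3)}_{RM}$ be coloured red/blue, and suppose $V(K)$ is partitioned into $R$ sets $V_1,\dots,V_R$ each inducing a red copy of $K^{(3)}_M$. Then at least one of the following holds: (a) for any collection of subsets $W_i\subseteq V_i$ with $|W_i|\geq M/2$ for all $i\in[R]$, there is a red tight path of length two in $K[\bigcup_{i\in[R]}W_i]$ connecting $W_j$ and $W_{j'}$ for some distinct $j,j'\in[R]$; (b) $K$ contains a blue copy of $H(TT_\chi,m)$.
   Context: $TT_\chi$ denotes the transitive tournament on $[\chi]$; $\vec{R}(\ell)$ is the least $N$ such that every tournament on at least $N$ vertices contains a copy of $TT_\ell$. For a tournament $T_\chi$ on $[\chi]$, $H(T_\chi,m)$ is the 3-uniform hypergraph on disjoint sets $A_1,\dots,A_\chi$ of size $m$ with edges $\{xyz: x,y\in A_i,\ z\in A_j,\ (i,j)\text{ an arc of }T_\chi\}$. A 3-uniform tight path of length two is a sequence of distinct vertices $v_1v_2v_3v_4$ with edges $v_1v_2v_3$ and $v_2v_3v_4$; its ends are $\{v_1,v_2\}$ and $\{v_3,v_4\}$, and it connects $S,S'$ if one end lies in $S$ and the other in $S'$. *)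

theory Defs
  imports Main
begin

definition tournament_on :: "'a set \<Rightarrow> ('a \<Rightarrow> 'a \<Rightarrow> bool) \<Rightarrow> bool" where
  "tournament_on S T \<longleftrightarrow>
     (\<forall>x\<in>S. \<not> T x x) \<and>
     (\<forall>x\<in>S. \<forall>y\<in>S. x \<noteq> y \<longrightarrow> (T x y \<longleftrightarrow> \<not> T y x))"

definition contains_TT :: "'a set \<Rightarrow> ('a \<Rightarrow> 'a \<Rightarrow> bool) \<Rightarrow> nat \<Rightarrow> bool" where
  "contains_TT S T l \<longleftrightarrow>
     (\<exists>g. inj_on g {1..l} \<and> g ` {1..l} \<subseteq> S \<and>
          (\<forall>i\<in>{1..l}. \<forall>j\<in>{1..l}. i < j \<longrightarrow> T (g i) (g j)))"

definition dir_ramsey :: "nat \<Rightarrow> nat" where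
  "dir_ramsey l = (LEAST N. \<forall>(S::nat set) T. finite S \<longrightarrow> card S \<ge> N \<longrightarrow>
       tournament_on S T \<longrightarrow> contains_TT S T l)"

text \<open>A red tight path of length two v1 v2 v3 v4 inside U (red edges are the triples
on which col is True), with end {v1,v2} in A and end {v3,v4} in B.\<close>
definition red_tight_path2 :: "('a set \<Rightarrow> bool) \<Rightarrow> 'a set \<Rightarrow> 'a set \<Rightarrow> 'a set \<Rightarrow> bool" where
  "red_tight_path2 col U A B \<longleftrightarrow>
     (\<exists>v1 v2 v3 v4. distinct [v1, v2, v3, v4] \<and> {v1, v2, v3, v4} \<subseteq> U \<and>
        col {v1, v2, v3} \<and> col {v2, v3, v4} \<and> {v1, v2} \<subseteq> A \<and> {v3, v4} \<subseteq> B)"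

text \<open>K (complete 3-graph on V, colouring col, False = blue) contains a blue copy of
H(TT_chi, m): vertex (i,a) of H lies in A_i, i \<in> [chi], a \<in> [m]; edges
{(i,a),(i,b),(j,c)} with a \<noteq> b and (i,j) an arc of TT_chi, i.e. i < j.\<close>
definition blue_H_TT :: "'a set \<Rightarrow> ('a set \<Rightarrow> bool) \<Rightarrow> nat \<Rightarrow> nat \<Rightarrow> bool" where
  "blue_H_TT V col chi m \<longleftrightarrow>
     (\<exists>f :: nat \<times> nat \<Rightarrow> 'a.
        inj_on f ({1..chi} \<times> {1..m}) \<and> f ` ({1..chi} \<times> {1..m}) \<subseteq> V \<and>
        (\<forall>i\<in>{1..chi}. \<forall>j\<in>{1..chi}. \<forall>a\<in>{1..m}. \<forall>b\<in>{1..m}. \<forall>c\<in>{1..m}.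
           i < j \<longrightarrow> a \<noteq> b \<longrightarrow> \<not> col {f (i, a), f (i, b), f (j, c)}))"

end

theory Submission
  imports Defs
begin

text \<open>
  Let R be the directed Ramsey number of TT_chi, and let W_1, ..., W_R be large parts with no red
  tight path of length two between distinct parts. For i < j, colour a pair (x, y) in W_i \<times> W_j
  by whether x and y lie in a red edge {x, x', y} with x' another vertex of W_i. Iterated bipartite
  Ramsey gives m-subsets Y_i \<subseteq> W_i such that each of these colourings is constant on Y_i \<times> Y_j.
  Orient i \<rightarrow> j if the colour is "no" and j \<rightarrow> i otherwise. In both cases every edge {x, x', y} with
  x, x' in the tail part and y in the head part is blue: in the first case by the colour itself, in
  the second because a red edge {y, y', x} together with a red edge {x, x', y} would form the red
  tight path y' y x x'. A transitive subtournament on chi parts, which exists by the choice of R, is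
  then a blue copy of H(TT_chi, m).
\<close>

lemma pigeonhole_bool:
  fixes p :: "'a \<Rightarrow> bool"
  assumes "finite Y" "2 * q \<le> Suc (card Y)"
  obtains \<beta> where "q \<le> card {y\<in>Y. p y = \<beta>}"
proof -
  have "{y\<in>Y. p y = False} = Y - {y\<in>Y. p y = True}"
    by auto
  then have "card {y\<in>Y. p y = False} = card Y - card {y\<in>Y. p y = True}"
    using assms(1) by (simp add: card_Diff_subset)
  moreover have "card {y\<in>Y. p y = True} \<le> card Y"
    using assms(1) by (simp add: card_mono)
  ultimately have "q \<le> card {y\<in>Y. p y = True} \<or> q \<le> card {y\<in>Y. p y = False}"
    using assms(2) by linarith
  then show thesis
    using that by blast
qed

lemma row_homogeneous_subsets:
  fixes c :: "'a \<Rightarrow> 'b \<Rightarrow> bool"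
  assumes "finite X" "finite Y" "k \<le> card X" "2 ^ k * n \<le> card Y"
  shows "\<exists>S Y'. S \<subseteq> X \<and> card S = k \<and> Y' \<subseteq> Y \<and> n \<le> card Y' \<and>
           (\<forall>x\<in>S. \<forall>y\<in>Y'. \<forall>y'\<in>Y'. c x y = c x y')"
  using assms
proof (induction k arbitrary: X Y)
  case 0
  then show ?case by (intro exI[of _ "{}"] exI[of _ Y]) auto
next
  case (Suc k)
  then obtain x0 where x0: "x0 \<in> X"
    by (metis card.empty ex_in_conv not_less_eq_eq zero_le)
  obtain \<beta> where \<beta>: "2 ^ k * n \<le> card {y\<in>Y. c x0 y = \<beta>}"
    using pigeonhole_bool[OF Suc.prems(2), of "2 ^ k * n" "c x0"] Suc.prems(4) by auto
  have kX: "k \<le> card (X - {x0})"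
    using Suc.prems(1,3) x0 by simp
  obtain S Y' where S: "S \<subseteq> X - {x0}" "card S = k" "Y' \<subseteq> {y\<in>Y. c x0 y = \<beta>}"
      "n \<le> card Y'" "\<forall>x\<in>S. \<forall>y\<in>Y'. \<forall>y'\<in>Y'. c x y = c x y'"
    using Suc.IH[of "X - {x0}", OF _ _ kX \<beta>] Suc.prems(1,2) by auto
  have "finite S"
    using S(1) Suc.prems(1) by (meson finite_Diff finite_subset)
  moreover have "x0 \<notin> S"
    using S(1) by blast
  ultimately have "card (insert x0 S) = Suc k"
    using S(2) by simp
  moreover have "\<forall>x\<in>insert x0 S. \<forall>y\<in>Y'. \<forall>y'\<in>Y'. c x y = c x y'"
  proof (intro ballI)
    fix x y y' assume "x \<in> insert x0 S" "y \<in> Y'" "y' \<in> Y'"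
    then show "c x y = c x y'"
      using S(3,5) by blast
  qed
  moreover have "insert x0 S \<subseteq> X" "Y' \<subseteq> Y"
    using S(1,3) x0 by auto
  ultimately show ?case
    using S(4) by blast
qed

definition bipartite_ramsey_bound :: "nat \<Rightarrow> nat" where
  "bipartite_ramsey_bound n = 2 ^ (2 * n) * n + 2 * n"

lemma bipartite_ramsey:
  fixes c :: "'a \<Rightarrow> 'b \<Rightarrow> bool"
  assumes "finite X" "finite Y" "bipartite_ramsey_bound n \<le> card X" "bipartite_ramsey_bound n \<le> card Y"
  obtains A B \<beta> where "A \<subseteq> X" "B \<subseteq> Y" "card A = n" "card B = n"
    "\<forall>x\<in>A. \<forall>y\<in>B. c x y = \<beta>"
proof (cases "n = 0")
  case True
  then show thesis using that[of "{}" "{}"] by simp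
next
  case False
  have X: "2 * n \<le> card X" and Y: "2 ^ (2 * n) * n \<le> card Y"
    using assms(3,4) by (simp_all add: bipartite_ramsey_bound_def)
  obtain S Y' where S: "S \<subseteq> X" "card S = 2 * n" "Y' \<subseteq> Y" "n \<le> card Y'"
      "\<forall>x\<in>S. \<forall>y\<in>Y'. \<forall>y'\<in>Y'. c x y = c x y'"
    using row_homogeneous_subsets[where c = c, OF assms(1,2) X Y] by blast
  obtain B where B: "B \<subseteq> Y'" "card B = n"
    using obtain_subset_with_card_n[OF S(4)] by blast
  with False obtain y0 where y0: "y0 \<in> B"
    by fastforce
  have "finite S"
    using S(1) assms(1) finite_subset by blast
  then obtain \<beta> where "n \<le> card {x\<in>S. c x y0 = \<beta>}"
    using pigeonhole_bool[of S n "\<lambda>x. c x y0"] S(2) by force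
  then obtain A where A: "A \<subseteq> {x\<in>S. c x y0 = \<beta>}" "card A = n"
    by (meson obtain_subset_with_card_n)
  have "\<forall>x\<in>A. \<forall>y\<in>B. c x y = \<beta>"
    using A(1) B(1) S(5) y0 by blast
  then show thesis
    using that[of A B \<beta>] A B S by blast
qed

lemma obtain_subsets_with_card_n:
  assumes "\<forall>i\<in>I. n \<le> card (X i)"
  obtains Y where "\<forall>i\<in>I. Y i \<subseteq> X i \<and> card (Y i) = n"
proof -
  have "\<forall>i\<in>I. \<exists>Z. Z \<subseteq> X i \<and> card Z = n"
    using assms by (meson obtain_subset_with_card_n)
  then show thesis
    using that by (metis bchoice)
qed

definition pairwise_homogeneous ::
    "('i \<times> 'i) set \<Rightarrow> ('i \<Rightarrow> 'i \<Rightarrow> 'a \<Rightarrow> 'a \<Rightarrow> bool) \<Rightarrow> ('i \<Rightarrow> 'a set) \<Rightarrow> bool" where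
  "pairwise_homogeneous Q c Y \<longleftrightarrow> (\<forall>(i, j)\<in>Q. \<exists>\<beta>. \<forall>x\<in>Y i. \<forall>y\<in>Y j. c i j x y = \<beta>)"

lemma simultaneous_bipartite_ramsey:
  fixes X :: "'i \<Rightarrow> 'a set" and c :: "'i \<Rightarrow> 'i \<Rightarrow> 'a \<Rightarrow> 'a \<Rightarrow> bool"
  assumes "finite Q" "\<forall>(i, j)\<in>Q. i \<in> I \<and> j \<in> I \<and> i \<noteq> j"
    and "\<forall>i\<in>I. finite (X i) \<and> (bipartite_ramsey_bound ^^ card Q) n \<le> card (X i)"
  shows "\<exists>Y. (\<forall>i\<in>I. Y i \<subseteq> X i \<and> card (Y i) = n) \<and> pairwise_homogeneous Q c Y"
  using assms
proof (induction Q arbitrary: n rule: finite_induct)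
  case empty
  then obtain Y where "\<forall>i\<in>I. Y i \<subseteq> X i \<and> card (Y i) = n"
    using obtain_subsets_with_card_n[of I n X] by auto
  then show ?case
    by (auto simp: pairwise_homogeneous_def)
next
  case (insert q Q)
  obtain i0 j0 where q: "q = (i0, j0)"
    by fastforce
  have ij: "i0 \<in> I" "j0 \<in> I" "i0 \<noteq> j0"
    using insert.prems(1) q by auto
  have "(bipartite_ramsey_bound ^^ card (insert q Q)) n
      = (bipartite_ramsey_bound ^^ card Q) (bipartite_ramsey_bound n)"
    using insert.hyps by (simp del: funpow.simps add: funpow_Suc_right)
  then have "\<forall>i\<in>I. finite (X i) \<and> (bipartite_ramsey_bound ^^ card Q) (bipartite_ramsey_bound n) \<le> card (X i)"
    using insert.prems(2) by simp
  then obtain Y' where Y': "\<forall>i\<in>I. Y' i \<subseteq> X i \<and> card (Y' i) = bipartite_ramsey_bound n"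
    and hom: "pairwise_homogeneous Q c Y'"
    using insert.IH insert.prems(1) by blast
  have "finite (Y' i0)" "finite (Y' j0)"
    using Y' ij insert.prems(2) finite_subset by metis+
  then obtain A B \<beta> where AB: "A \<subseteq> Y' i0" "B \<subseteq> Y' j0" "card A = n" "card B = n"
    "\<forall>x\<in>A. \<forall>y\<in>B. c i0 j0 x y = \<beta>"
    using bipartite_ramsey[of "Y' i0" "Y' j0" n "c i0 j0"] Y' ij by auto
  obtain Z where Z: "\<forall>i\<in>I. Z i \<subseteq> Y' i \<and> card (Z i) = n"
    using obtain_subsets_with_card_n[of I n Y'] Y' by (auto simp: bipartite_ramsey_bound_def)
  define Y where "Y = Z(i0 := A, j0 := B)"
  have Y_sub: "\<forall>i\<in>I. Y i \<subseteq> Y' i"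
    using Z AB ij by (simp add: Y_def)
  have "\<forall>i\<in>I. card (Y i) = n"
    using Z AB by (simp add: Y_def)
  then have "\<forall>i\<in>I. Y i \<subseteq> X i \<and> card (Y i) = n"
    using Y_sub Y' by blast
  moreover have "pairwise_homogeneous (insert q Q) c Y"
    unfolding pairwise_homogeneous_def
  proof (intro ballI, clarify)
    fix i j assume "(i, j) \<in> insert q Q"
    then consider "(i, j) = (i0, j0)" | "(i, j) \<in> Q"
      using q by blast
    then show "\<exists>\<beta>. \<forall>x\<in>Y i. \<forall>y\<in>Y j. c i j x y = \<beta>"
    proof cases
      case 1
      then show ?thesis
        using AB(5) ij(3) by (auto simp: Y_def)
    next
      case 2
      then have "Y i \<subseteq> Y' i" "Y j \<subseteq> Y' j"
        using Y_sub insert.prems(1) by auto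
      moreover obtain \<beta> where "\<forall>x\<in>Y' i. \<forall>y\<in>Y' j. c i j x y = \<beta>"
        using bspec[OF hom[unfolded pairwise_homogeneous_def] 2] by auto
      ultimately show ?thesis
        by (intro exI[of _ \<beta>]) auto
    qed
  qed
  ultimately show ?case
    by blast
qed

lemma tournament_on_subset:
  "tournament_on S T \<Longrightarrow> S' \<subseteq> S \<Longrightarrow> tournament_on S' T"
  unfolding tournament_on_def by blast

lemma contains_TT_if_sorted_wrt:
  assumes "distinct xs" "set xs \<subseteq> S" "sorted_wrt T xs"
  shows "contains_TT S T (length xs)"
proof -
  let ?g = "\<lambda>i. xs ! (i - 1)"
  have "inj_on ?g {1..length xs}"
    using assms(1) by (auto simp: inj_on_def nth_eq_iff_index_eq)
  moreover have "?g ` {1..length xs} \<subseteq> S"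
    using assms(2) nth_mem[of "_ - 1" xs] by fastforce
  moreover have "\<forall>i\<in>{1..length xs}. \<forall>j\<in>{1..length xs}. i < j \<longrightarrow> T (?g i) (?g j)"
    using assms(3) by (auto simp: sorted_wrt_iff_nth_less)
  ultimately show ?thesis
    unfolding contains_TT_def by blast
qed

lemma tournament_ex_transitive_list:
  assumes "finite S" "tournament_on S T" "2 ^ l \<le> card S"
  shows "\<exists>xs. length xs = l \<and> distinct xs \<and> set xs \<subseteq> S \<and> sorted_wrt T xs"
  using assms
proof (induction l arbitrary: S)
  case 0
  show ?case
    by (intro exI[of _ "[]"]) simp
next
  case (Suc l)
  then obtain v where v: "v \<in> S"
    by (metis card.empty ex_in_conv not_one_le_zero one_le_power one_le_numeral order_trans)
  have "2 * 2 ^ l \<le> Suc (card (S - {v}))"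
    using Suc.prems(1,3) v by simp
  then obtain \<beta> where \<beta>: "2 ^ l \<le> card {u\<in>S - {v}. T v u = \<beta>}"
    using pigeonhole_bool[of "S - {v}" "2 ^ l" "T v"] Suc.prems(1) by blast
  define C where "C = {u\<in>S - {v}. T v u = \<beta>}"
  have "C \<subseteq> S"
    by (auto simp: C_def)
  then have "finite C" "tournament_on C T"
    using Suc.prems(1,2) finite_subset tournament_on_subset by blast+
  then obtain xs where xs: "length xs = l" "distinct xs" "set xs \<subseteq> C" "sorted_wrt T xs"
    using Suc.IH \<beta> unfolding C_def by blast
  have "v \<notin> set xs" "set xs \<subseteq> S"
    using xs(3) by (auto simp: C_def)
  show ?case
  proof (cases \<beta>)
    case True
    then have "\<forall>u\<in>set xs. T v u"
      using xs(3) by (auto simp: C_def)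
    then show ?thesis
      using xs \<open>v \<notin> set xs\<close> \<open>set xs \<subseteq> S\<close> v by (intro exI[of _ "v # xs"]) auto
  next
    case False
    then have "\<forall>u\<in>set xs. T u v"
      using xs(3) Suc.prems(2) v unfolding tournament_on_def C_def by blast
    then show ?thesis
      using xs \<open>v \<notin> set xs\<close> \<open>set xs \<subseteq> S\<close> v
      by (intro exI[of _ "xs @ [v]"]) (auto simp: sorted_wrt_append)
  qed
qed

lemma contains_TT_if_card_ge_dir_ramsey:
  fixes S :: "nat set"
  assumes "finite S" "dir_ramsey l \<le> card S" "tournament_on S T"
  shows "contains_TT S T l"
proof -
  have "\<forall>(S::nat set) T. finite S \<longrightarrow> 2 ^ l \<le> card S \<longrightarrow> tournament_on S T \<longrightarrow> contains_TT S T l"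
    using tournament_ex_transitive_list contains_TT_if_sorted_wrt by metis
  then have "\<forall>(S::nat set) T. finite S \<longrightarrow> dir_ramsey l \<le> card S \<longrightarrow> tournament_on S T \<longrightarrow>
      contains_TT S T l"
    unfolding dir_ramsey_def by (rule LeastI)
  then show ?thesis
    using assms by blast
qed

definition red_link :: "('a set \<Rightarrow> bool) \<Rightarrow> 'a set \<Rightarrow> 'a \<Rightarrow> 'a \<Rightarrow> bool" where
  "red_link col A x y \<longleftrightarrow> (\<exists>x'\<in>A. x' \<noteq> x \<and> col {x, x', y})"

lemma not_col_if_red_link:
  assumes "\<not> red_tight_path2 col U B A" "A \<inter> B = {}" "A \<subseteq> U" "B \<subseteq> U"
    and "y \<in> B" "red_link col B y x" "x \<in> A" "x' \<in> A" "x \<noteq> x'"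
  shows "\<not> col {x, x', y}"
proof
  assume red: "col {x, x', y}"
  obtain y' where y': "y' \<in> B" "y' \<noteq> y" "col {y, y', x}"
    using assms(6) unfolding red_link_def by blast
  have "distinct [y', y, x, x']"
    using assms(2,5,7,8,9) y'(1,2) by auto
  moreover have "{y', y, x, x'} \<subseteq> U"
    using assms(3,4,5,7,8) y'(1) by auto
  moreover have "col {y', y, x}" "col {y, x, x'}"
    using y'(3) red by (simp_all add: insert_commute)
  ultimately have "red_tight_path2 col U B A"
    unfolding red_tight_path2_def using assms(5,7,8) y'(1) by blast
  with assms(1) show False ..
qed

lemma blue_H_TT_if_blue_sequence:
  fixes Z :: "nat \<Rightarrow> 'a set"
  assumes Z: "\<forall>s\<in>{1..chi}. Z s \<subseteq> V \<and> finite (Z s) \<and> card (Z s) = m"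
    and disjoint: "\<forall>s\<in>{1..chi}. \<forall>t\<in>{1..chi}. s \<noteq> t \<longrightarrow> Z s \<inter> Z t = {}"
    and blue: "\<forall>s\<in>{1..chi}. \<forall>t\<in>{1..chi}. s < t \<longrightarrow>
      (\<forall>x\<in>Z s. \<forall>x'\<in>Z s. \<forall>y\<in>Z t. x \<noteq> x' \<longrightarrow> \<not> col {x, x', y})"
  shows "blue_H_TT V col chi m"
proof -
  have "\<forall>s\<in>{1..chi}. \<exists>h. bij_betw h {1..m} (Z s)"
    using Z ex_bij_betw_nat_finite_1 by metis
  then obtain h where h: "\<forall>s\<in>{1..chi}. bij_betw (h s) {1..m} (Z s)"
    by (metis bchoice)
  define f where "f p = h (fst p) (snd p)" for p
  have f_in: "f (s, a) \<in> Z s" if "s \<in> {1..chi}" "a \<in> {1..m}" for s a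
    using h that bij_betwE by (fastforce simp: f_def)
  have f_inj: "f (s, a) = f (s, b) \<longleftrightarrow> a = b"
    if "s \<in> {1..chi}" "a \<in> {1..m}" "b \<in> {1..m}" for s a b
  proof -
    have "inj_on (h s) {1..m}"
      using h that(1) bij_betw_imp_inj_on by blast
    then show ?thesis
      using that(2,3) by (simp add: f_def inj_on_eq_iff)
  qed
  have "inj_on f ({1..chi} \<times> {1..m})"
  proof (rule inj_onI, clarify)
    fix s a t b
    assume s: "s \<in> {1..chi}" "a \<in> {1..m}" and t: "t \<in> {1..chi}" "b \<in> {1..m}"
      and eq: "f (s, a) = f (t, b)"
    have "f (s, a) \<in> Z s \<inter> Z t"
      using f_in[OF s] f_in[OF t] eq by simp
    then have "s = t"
      using disjoint s(1) t(1) by blast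
    then show "s = t \<and> a = b"
      using f_inj s t eq by blast
  qed
  moreover have "f ` ({1..chi} \<times> {1..m}) \<subseteq> V"
    using Z f_in by blast
  moreover have "\<forall>s\<in>{1..chi}. \<forall>t\<in>{1..chi}. \<forall>a\<in>{1..m}. \<forall>b\<in>{1..m}. \<forall>c\<in>{1..m}.
      s < t \<longrightarrow> a \<noteq> b \<longrightarrow> \<not> col {f (s, a), f (s, b), f (t, c)}"
    using blue f_in f_inj by metis
  ultimately show ?thesis
    unfolding blue_H_TT_def by blast
qed

lemma blue_H_TT_if_homogeneous_red_links:
  fixes W Y :: "nat \<Rightarrow> 'a set"
  assumes "dir_ramsey chi \<le> R" "finite V"
    and W: "\<forall>i\<in>{1..R}. W i \<subseteq> V"
    and disjoint: "\<forall>i\<in>{1..R}. \<forall>j\<in>{1..R}. i \<noteq> j \<longrightarrow> W i \<inter> W j = {}"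
    and no_path: "\<forall>i\<in>{1..R}. \<forall>j\<in>{1..R}. i \<noteq> j \<longrightarrow>
      \<not> red_tight_path2 col (\<Union>k\<in>{1..R}. W k) (W i) (W j)"
    and Y: "\<forall>i\<in>{1..R}. Y i \<subseteq> W i \<and> card (Y i) = m"
    and hom: "pairwise_homogeneous {(i, j). i \<in> {1..R} \<and> j \<in> {1..R} \<and> i < j}
      (\<lambda>i j. red_link col (W i)) Y"
  shows "blue_H_TT V col chi m"
proof -
  define b where "b i j \<longleftrightarrow> (\<forall>x\<in>Y i. \<forall>y\<in>Y j. red_link col (W i) x y)" for i j
  have b: "red_link col (W i) x y = b i j"
    if ij: "i \<in> {1..R}" "j \<in> {1..R}" "i < j" and xy: "x \<in> Y i" "y \<in> Y j" for i j x y
  proof -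
    obtain \<beta> where "\<forall>x\<in>Y i. \<forall>y\<in>Y j. red_link col (W i) x y = \<beta>"
      using bspec[OF hom[unfolded pairwise_homogeneous_def], of "(i, j)"] ij by auto
    then show ?thesis
      using xy unfolding b_def by metis
  qed
  define T where "T i j \<longleftrightarrow> i \<in> {1..R} \<and> j \<in> {1..R} \<and> (i < j \<and> \<not> b i j \<or> j < i \<and> b j i)"
    for i j
  have blue: "\<not> col {x, x', y}"
    if "T i j" "x \<in> Y i" "x' \<in> Y i" "x \<noteq> x'" "y \<in> Y j" for i j x x' y
  proof -
    have ij: "i \<in> {1..R}" "j \<in> {1..R}" "i \<noteq> j"
      using that(1) unfolding T_def by auto
    have xy: "x \<in> W i" "x' \<in> W i" "y \<in> W j"
      using Y ij that(2,3,5) by blast+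
    show ?thesis
    proof (cases "i < j")
      case True
      then have "\<not> red_link col (W i) x y"
        using b ij that unfolding T_def by auto
      then have "\<forall>x''\<in>W i. x'' \<noteq> x \<longrightarrow> \<not> col {x, x'', y}"
        unfolding red_link_def by blast
      then show ?thesis
        using xy(2) that(4) by simp
    next
      case False
      then have "red_link col (W j) y x"
        using b ij that unfolding T_def by auto
      moreover have "\<not> red_tight_path2 col (\<Union>k\<in>{1..R}. W k) (W j) (W i)"
        using no_path ij(1,2) ij(3)[symmetric] by simp
      moreover have "W i \<inter> W j = {}"
        using disjoint ij by blast
      ultimately show ?thesis
        using not_col_if_red_link xy that(4) ij(1,2) by (metis UN_upper)
    qed
  qed
  have "tournament_on {1..R} T"
    unfolding tournament_on_def T_def by auto
  then have "contains_TT {1..R} T chi"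
    using contains_TT_if_card_ge_dir_ramsey assms(1) by simp
  then obtain g where g: "inj_on g {1..chi}" "g ` {1..chi} \<subseteq> {1..R}"
    "\<forall>s\<in>{1..chi}. \<forall>t\<in>{1..chi}. s < t \<longrightarrow> T (g s) (g t)"
    unfolding contains_TT_def by blast
  show ?thesis
  proof (rule blue_H_TT_if_blue_sequence[where Z = "\<lambda>s. Y (g s)"]; intro ballI impI)
    fix s assume "s \<in> {1..chi}"
    then have "g s \<in> {1..R}"
      using g(2) by blast
    then have "Y (g s) \<subseteq> V" "card (Y (g s)) = m"
      using Y W by blast+
    then show "Y (g s) \<subseteq> V \<and> finite (Y (g s)) \<and> card (Y (g s)) = m"
      using assms(2) finite_subset by blast
  next
    fix s t assume st: "s \<in> {1..chi}" "t \<in> {1..chi}" "s \<noteq> t"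
    then have "g s \<noteq> g t"
      by (simp add: inj_on_eq_iff[OF g(1)])
    moreover have "g s \<in> {1..R}" "g t \<in> {1..R}"
      using g(2) st by blast+
    ultimately show "Y (g s) \<inter> Y (g t) = {}"
      using Y disjoint by blast
  next
    fix s t x x' y
    assume "s \<in> {1..chi}" "t \<in> {1..chi}" "s < t"
      and "x \<in> Y (g s)" "x' \<in> Y (g s)" "y \<in> Y (g t)" "x \<noteq> x'"
    then show "\<not> col {x, x', y}"
      using g(3) blue by blast
  qed
qed

lemma blue_H_TT_if_no_red_tight_path2:
  fixes W :: "nat \<Rightarrow> 'a set" and R :: nat
  defines "Q \<equiv> {(i, j). i \<in> {1..R} \<and> j \<in> {1..R} \<and> i < j}"
  assumes "dir_ramsey chi \<le> R" "finite V"
    and P: "\<forall>i\<in>{1..R}. P i \<subseteq> V"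
    and disjoint: "\<forall>i\<in>{1..R}. \<forall>j\<in>{1..R}. i \<noteq> j \<longrightarrow> P i \<inter> P j = {}"
    and M: "2 * (bipartite_ramsey_bound ^^ card Q) m \<le> M"
    and W: "\<forall>i\<in>{1..R}. W i \<subseteq> P i \<and> M \<le> 2 * card (W i)"
    and no_path: "\<not> (\<exists>j\<in>{1..R}. \<exists>j'\<in>{1..R}. j \<noteq> j' \<and>
      red_tight_path2 col (\<Union>i\<in>{1..R}. W i) (W j) (W j'))"
  shows "blue_H_TT V col chi m"
proof -
  have "finite Q"
    unfolding Q_def by (rule finite_subset[of _ "{1..R} \<times> {1..R}"]) auto
  moreover have "\<forall>(i, j)\<in>Q. i \<in> {1..R} \<and> j \<in> {1..R} \<and> i \<noteq> j"
    unfolding Q_def by auto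
  moreover have "\<forall>i\<in>{1..R}. finite (W i) \<and> (bipartite_ramsey_bound ^^ card Q) m \<le> card (W i)"
  proof
    fix i assume "i \<in> {1..R}"
    then have "W i \<subseteq> V" "M \<le> 2 * card (W i)"
      using W P by blast+
    then show "finite (W i) \<and> (bipartite_ramsey_bound ^^ card Q) m \<le> card (W i)"
      using M \<open>finite V\<close> finite_subset by auto
  qed
  ultimately have "\<exists>Y. (\<forall>i\<in>{1..R}. Y i \<subseteq> W i \<and> card (Y i) = m) \<and>
      pairwise_homogeneous Q (\<lambda>i j. red_link col (W i)) Y"
    by (rule simultaneous_bipartite_ramsey)
  then obtain Y where "\<forall>i\<in>{1..R}. Y i \<subseteq> W i \<and> card (Y i) = m"
    and "pairwise_homogeneous Q (\<lambda>i j. red_link col (W i)) Y"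
    by blast
  moreover have "\<forall>i\<in>{1..R}. W i \<subseteq> V"
    using W P by blast
  moreover have "\<forall>i\<in>{1..R}. \<forall>j\<in>{1..R}. i \<noteq> j \<longrightarrow> W i \<inter> W j = {}"
    using W disjoint by blast
  ultimately show ?thesis
    using blue_H_TT_if_homogeneous_red_links[OF assms(2,3)] no_path unfolding Q_def by blast
qed

theorem lemma5p1:
  fixes chi m :: nat
  assumes "chi \<ge> 2" and "m \<ge> 2"
  shows "\<exists>M0::nat. \<forall>M \<ge> M0. \<forall>(V::nat set) (col::nat set \<Rightarrow> bool) (P::nat \<Rightarrow> nat set).
     finite V \<and> card V = dir_ramsey chi * M \<and>
     (\<forall>i\<in>{1..dir_ramsey chi}. P i \<subseteq> V \<and> card (P i) = M) \<and>
     (\<forall>i\<in>{1..dir_ramsey chi}. \<forall>j\<in>{1..dir_ramsey chi}. i \<noteq> j \<longrightarrow> P i \<inter> P j = {}) \<and>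
     (\<Union>i\<in>{1..dir_ramsey chi}. P i) = V \<and>
     (\<forall>i\<in>{1..dir_ramsey chi}. \<forall>e. e \<subseteq> P i \<and> card e = 3 \<longrightarrow> col e)
     \<longrightarrow>
     ((\<forall>W::nat \<Rightarrow> nat set.
         (\<forall>i\<in>{1..dir_ramsey chi}. W i \<subseteq> P i \<and> 2 * card (W i) \<ge> M) \<longrightarrow>
         (\<exists>j\<in>{1..dir_ramsey chi}. \<exists>j'\<in>{1..dir_ramsey chi}. j \<noteq> j' \<and>
            red_tight_path2 col (\<Union>i\<in>{1..dir_ramsey chi}. W i) (W j) (W j')))
      \<or> blue_H_TT V col chi m)"
proof -
  let ?R = "dir_ramsey chi"
  let ?N = "(bipartite_ramsey_bound ^^ card {(i, j). i \<in> {1..?R} \<and> j \<in> {1..?R} \<and> i < j}) m"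
  show ?thesis
  proof (intro exI[of _ "2 * ?N"] allI impI, elim conjE, goal_cases)
    case (1 M V col P)
    then show ?case
      using blue_H_TT_if_no_red_tight_path2[of chi ?R V P m M _ col] by blast
  qed
qed

end
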